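(* Let $n\geq 2$ and let $L=(a,b,c)$ be an arbitrary sequence of three positive integers such that $UD_n(L)\neq\emptyset$. Then $\rho_{n,L}>\alpha_n$, where $\alpha_2=1/6$ and $\alpha_n=(n-2)/n$ for $n>2$.
   Context: Let $X$ be a finite alphabet with $n\geq 2$ letters and $X^*$ the set of words over $X$; $|v|$ is the length of a word $v$. A code over $X$ is a finite sequence $C=(v_1,\ldots,v_m)$ of words over $X$ such that every $w\in X^*$ has at most one factorization into code-words: if $w=v_{i_1}\cdots v_{i_l}=v_{j_1}\cdots v_{j_{l'}}$ with $l,l'\geq1$, then $l=l'$ and $i_t=j_t$ for all $t$. (Codes are sequences, not sets.) A code $C=(v_1,\ldots,v_m)$ is a prefix code if for all $i,j$, $v_i$ is a prefix of $v_j$ if and only if $i=j$. For a finite sequence $L=(a_1,\ldots,a_m)$ of positive integers, $UD_n(L)$ is the set of all codes $(v_1,\ldots,v_m)$ over an $n$-letter alphabet with $|v_i|=a_i$ for all $i$, $PR_n(L)\subseteq UD_n(L)$ is the subset of prefix codes, and $\rho_{n,L}=|PR_n(L)|/|UD_n(L)|$ (defined when $UD_n(L)\ne\emptyset$). *)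

theory Defs
  imports Complex_Main "HOL-Library.Sublist"
begin

definition is_code :: "nat list list \<Rightarrow> bool" where
  "is_code C \<longleftrightarrow>
     (\<forall>is js. is \<noteq> [] \<longrightarrow> js \<noteq> [] \<longrightarrow>
        set is \<subseteq> {..<length C} \<longrightarrow> set js \<subseteq> {..<length C} \<longrightarrow>
        concat (map (\<lambda>i. C ! i) is) = concat (map (\<lambda>j. C ! j) js) \<longrightarrow> is = js)"

definition is_prefix_code :: "nat list list \<Rightarrow> bool" where
  "is_prefix_code C \<longleftrightarrow>
     (\<forall>i<length C. \<forall>j<length C. prefix (C ! i) (C ! j) \<longleftrightarrow> i = j)"

definition UD :: "nat \<Rightarrow> nat list \<Rightarrow> nat list list set" where
  "UD n L = {C. length C = length L
               \<and> (\<forall>i<length L. length (C ! i) = L ! i \<and> set (C ! i) \<subseteq> {..<n})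
               \<and> is_code C}"

definition PR :: "nat \<Rightarrow> nat list \<Rightarrow> nat list list set" where
  "PR n L = {C \<in> UD n L. is_prefix_code C}"

definition rho :: "nat \<Rightarrow> nat list \<Rightarrow> real" where
  "rho n L = real (card (PR n L)) / real (card (UD n L))"

definition alpha :: "nat \<Rightarrow> real" where
  "alpha n = (if n = 2 then 1/6 else (real n - 2) / real n)"

end

theory Submission
  imports Defs "HOL-Combinatorics.Permutations"
begin

text \<open>Both counts are invariant under permuting the lengths, so let \<open>a \<le> b \<le> c\<close>. A triple of
  words of these lengths is then a prefix code iff neither of the two shorter words is a prefix of
  a longer one, which gives exactly \<open>|PR| = n^a (n^b - n^(b-a)) (n^c - n^(c-a) - n^(c-b))\<close>.
  Against the trivial bound \<open>|UD| \<le> n^(a+b+c)\<close> this beats \<open>\<alpha>_n\<close> except for the lengths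
  \<open>(1, 1, c)\<close> and, when \<open>n = 2\<close>, \<open>(1, 2, c)\<close>. There unique decodability forbids a code word to
  be a power of another one, which sharpens the bound to \<open>n (n - 1) (n^c - 2)\<close>, resp.
  \<open>n (n^2 - 1) (n^c - 1)\<close>; for \<open>n = 2\<close> and lengths \<open>(1, 1, c)\<close> the two letters spell every
  third word, so there is no code at all.\<close>

section \<open>Words over an \<open>n\<close>-letter alphabet\<close>

definition words :: "nat \<Rightarrow> nat \<Rightarrow> nat list set" where
  "words n k = {w. set w \<subseteq> {..<n} \<and> length w = k}"

lemma finite_words [simp]: "finite (words n k)"
  unfolding words_def by (rule finite_lists_length_eq) simp

lemma card_words: "card (words n k) = n ^ k"
  unfolding words_def using card_lists_length_eq[of "{..<n}" k] by simp

lemma prefix_length_ge_imp_eq: "prefix u v \<Longrightarrow> length v \<le> length u \<Longrightarrow> u = v"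
  by (metis append_Nil2 append_eq_conv_conj le_antisym prefix_def prefix_length_le take_all)

lemma real_card_Diff_subset:
  "finite A \<Longrightarrow> B \<subseteq> A \<Longrightarrow> real (card (A - B)) = real (card A) - real (card B)"
  by (simp add: card_Diff_subset card_mono finite_subset of_nat_diff)

lemma real_card_Sigma_const:
  assumes "finite A" "\<And>x. x \<in> A \<Longrightarrow> finite (B x)" "\<And>x. x \<in> A \<Longrightarrow> real (card (B x)) = k"
  shows "real (card (Sigma A B)) = real (card A) * k"
proof -
  have "real (card (Sigma A B)) = (\<Sum>x\<in>A. real (card (B x)))"
    using assms(1,2) by (simp add: card_SigmaI)
  also have "\<dots> = real (card A) * k"
    using assms(3) by simp
  finally show ?thesis .
qed

lemma real_card_Sigma_Sigma_const:
  assumes "finite A" "\<And>x. x \<in> A \<Longrightarrow> finite (B x)" "\<And>x y. x \<in> A \<Longrightarrow> y \<in> B x \<Longrightarrow> finite (C x y)"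
    and "\<And>x. x \<in> A \<Longrightarrow> real (card (B x)) = k"
    and "\<And>x y. x \<in> A \<Longrightarrow> y \<in> B x \<Longrightarrow> real (card (C x y)) = l"
  shows "real (card (SIGMA x:A. SIGMA y:B x. C x y)) = real (card A) * k * l"
proof -
  have "real (card (SIGMA y:B x. C x y)) = k * l" if "x \<in> A" for x
    using real_card_Sigma_const[of "B x" "C x" l] assms that by simp
  then show ?thesis
    using real_card_Sigma_const[of A "\<lambda>x. SIGMA y:B x. C x y" "k * l"] assms by simp
qed

lemma real_card_words_Diff:
  "B \<subseteq> words n k \<Longrightarrow> real (card (words n k - B)) = real n ^ k - real (card B)"
  by (simp add: real_card_Diff_subset card_words)

lemma card_words_with_prefix:
  assumes "u \<in> words n k" "k \<le> m"
  shows "card {w \<in> words n m. prefix u w} = n ^ (m - k)"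
proof -
  have "{w \<in> words n m. prefix u w} = (\<lambda>t. u @ t) ` words n (m - k)"
    using assms by (auto simp: words_def prefix_def image_iff)
  moreover have "inj (\<lambda>t. u @ t)" by (simp add: inj_def)
  ultimately show ?thesis by (simp add: card_image inj_on_subset card_words)
qed

lemma card_words_without_prefix:
  assumes "u \<in> words n k" "k \<le> m"
  shows "real (card {w \<in> words n m. \<not> prefix u w}) = real n ^ m - real n ^ (m - k)"
proof -
  have "{w \<in> words n m. \<not> prefix u w} = words n m - {w \<in> words n m. prefix u w}" by auto
  then show ?thesis
    by (simp add: real_card_Diff_subset card_words card_words_with_prefix[OF assms])
qed

lemma card_words_without_prefixes:
  assumes u: "u \<in> words n k" and v: "v \<in> words n l" and "k \<le> l" "l \<le> m" "\<not> prefix u v"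
  shows "real (card {w \<in> words n m. \<not> prefix u w \<and> \<not> prefix v w})
         = real n ^ m - real n ^ (m - k) - real n ^ (m - l)"
proof -
  let ?E = "\<lambda>x. {w \<in> words n m. prefix x w}"
  have "\<not> prefix v u"
    using assms prefix_length_ge_imp_eq[of v u] by (auto simp: words_def)
  then have "?E u \<inter> ?E v = {}"
    using \<open>\<not> prefix u v\<close> prefix_same_cases by blast
  then have "card (?E u \<union> ?E v) = n ^ (m - k) + n ^ (m - l)"
    using assms by (simp add: card_Un_disjoint card_words_with_prefix)
  moreover have "{w \<in> words n m. \<not> prefix u w \<and> \<not> prefix v w} = words n m - (?E u \<union> ?E v)"
    by auto
  ultimately show ?thesis by (simp add: real_card_Diff_subset card_words)
qed

section \<open>Codes\<close>

lemma finite_UD: "finite (UD n L)"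
proof (rule finite_subset)
  show "UD n L \<subseteq> {C. set C \<subseteq> (\<Union>k\<in>set L. words n k) \<and> length C = length L}"
    by (fastforce simp: UD_def words_def in_set_conv_nth)
qed (simp add: finite_lists_length_eq)

lemma prefix_code_is_code:
  assumes pc: "is_prefix_code C" and ne: "[] \<notin> set C"
  shows "is_code C"
proof -
  have "is = js"
    if "set is \<subseteq> {..<length C}" "set js \<subseteq> {..<length C}"
      "concat (map ((!) C) is) = concat (map ((!) C) js)" for "is" js
    using that
  proof (induction "is" arbitrary: js)
    case Nil
    then show ?case using ne by (cases js) (auto simp: in_set_conv_nth)
  next
    case (Cons i is')
    then obtain j js' where js: "js = j # js'"
      using ne by (cases js) (auto simp: in_set_conv_nth)
    with Cons.prems have eq: "C ! i @ concat (map ((!) C) is') = C ! j @ concat (map ((!) C) js')"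
      and ij: "i < length C" "j < length C" by auto
    have "prefix (C ! i) (C ! j) \<or> prefix (C ! j) (C ! i)"
      using eq by (metis prefix_same_cases prefixI)
    then have "i = j" using pc ij by (auto simp: is_prefix_code_def)
    then show ?case using eq Cons js by auto
  qed
  then show ?thesis by (auto simp: is_code_def)
qed

lemma is_code_factorization_of_word:
  assumes "is_code C" "i < length C" "js \<noteq> []" "set js \<subseteq> {..<length C}"
    and "C ! i = concat (map ((!) C) js)"
  shows "js = [i]"
proof -
  have "[i] = js"
    using assms(1)[unfolded is_code_def, rule_format, of "[i]" js] assms(2-5) by simp
  then show ?thesis by simp
qed

lemma is_code_word_neq_power:
  assumes "is_code C" "i < length C" "j < length C" "i \<noteq> j" "0 < k"
  shows "C ! j \<noteq> concat (replicate k (C ! i))"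
proof
  assume "C ! j = concat (replicate k (C ! i))"
  then have "C ! j = concat (map ((!) C) (replicate k i))"
    by (simp add: map_replicate_const)
  then have "replicate k i = [j]"
    using is_code_factorization_of_word assms by simp
  then show False using \<open>i \<noteq> j\<close> by (cases k) auto
qed

lemma is_code_word_not_spelled_by_letters:
  assumes code: "is_code C" and i: "i < length C" "C ! i \<noteq> []"
    and letters: "\<And>l. l \<in> set (C ! i) \<Longrightarrow> \<exists>j. j < length C \<and> j \<noteq> i \<and> C ! j = [l]"
  shows False
proof -
  define idx where "idx l = (SOME j. j < length C \<and> j \<noteq> i \<and> C ! j = [l])" for l
  have idx: "idx l < length C \<and> idx l \<noteq> i \<and> C ! idx l = [l]" if "l \<in> set (C ! i)" for l
    unfolding idx_def using someI_ex[OF letters[OF that]] .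
  have "concat (map ((!) C) (map idx (C ! i))) = concat (map (\<lambda>l. [l]) (C ! i))"
    using idx by (simp cong: map_cong)
  then have "map idx (C ! i) = [i]"
    using is_code_factorization_of_word[OF code i(1)] i(2) idx by (auto simp: image_subset_iff)
  then have "i \<in> idx ` set (C ! i)" by (metis list.set_intros(1) set_map)
  then show False using idx by auto
qed

section \<open>Permuting the lengths\<close>

lemma permute_list_inv_cancel:
  assumes "\<sigma> permutes {..<length xs}"
  shows "permute_list (inv \<sigma>) (permute_list \<sigma> xs) = xs"
  using permute_list_compose[OF permutes_inv[OF assms], of \<sigma>] permutes_inv_o(1)[OF assms] by simp

lemma permute_list_cancel_inv:
  assumes "\<sigma> permutes {..<length xs}"
  shows "permute_list \<sigma> (permute_list (inv \<sigma>) xs) = xs"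
  using permute_list_compose[OF assms, of "inv \<sigma>"] permutes_inv_o(2)[OF assms] by simp

lemma bij_betw_permute_list:
  assumes \<sigma>: "\<sigma> permutes {..<length L}"
    and closed: "\<And>\<sigma> L C. \<sigma> permutes {..<length L} \<Longrightarrow> C \<in> F L \<Longrightarrow> permute_list \<sigma> C \<in> F (permute_list \<sigma> L)"
    and len: "\<And>L C. C \<in> F L \<Longrightarrow> length C = length L"
  shows "bij_betw (permute_list \<sigma>) (F L) (F (permute_list \<sigma> L))"
proof (rule bij_betw_byWitness[where f' = "permute_list (inv \<sigma>)"])
  have \<sigma>': "inv \<sigma> permutes {..<length (permute_list \<sigma> L)}"
    using permutes_inv[OF \<sigma>] by simp
  show "\<forall>C\<in>F L. permute_list (inv \<sigma>) (permute_list \<sigma> C) = C"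
    using permute_list_inv_cancel \<sigma> len by metis
  show "\<forall>C\<in>F (permute_list \<sigma> L). permute_list \<sigma> (permute_list (inv \<sigma>) C) = C"
    using permute_list_cancel_inv \<sigma> len by (metis length_permute_list)
  show "permute_list \<sigma> ` F L \<subseteq> F (permute_list \<sigma> L)"
    using closed[OF \<sigma>] by blast
  show "permute_list (inv \<sigma>) ` F (permute_list \<sigma> L) \<subseteq> F L"
    using closed[OF \<sigma>'] permute_list_inv_cancel[OF \<sigma>] by fastforce
qed

lemma concat_map_nth_permute_list:
  assumes "\<sigma> permutes {..<length C}" "set is \<subseteq> {..<length C}"
  shows "concat (map ((!) (permute_list \<sigma> C)) is) = concat (map ((!) C) (map \<sigma> is))"
  using assms by (simp add: permute_list_nth subset_iff cong: map_cong)

lemma is_code_permute_list: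
  assumes \<sigma>: "\<sigma> permutes {..<length C}" and code: "is_code C"
  shows "is_code (permute_list \<sigma> C)"
  unfolding is_code_def
proof (intro allI impI)
  fix "is" js
  assume "is \<noteq> []" "js \<noteq> []" and range: "set is \<subseteq> {..<length (permute_list \<sigma> C)}"
    "set js \<subseteq> {..<length (permute_list \<sigma> C)}"
    and eq: "concat (map ((!) (permute_list \<sigma> C)) is) = concat (map ((!) (permute_list \<sigma> C)) js)"
  have "set (map \<sigma> ks) \<subseteq> {..<length C}" if "set ks \<subseteq> {..<length C}" for ks
    using that permutes_in_image[OF \<sigma>] by auto
  then have "map \<sigma> is = map \<sigma> js"
    using code[unfolded is_code_def, rule_format, of "map \<sigma> is" "map \<sigma> js"]
      \<open>is \<noteq> []\<close> \<open>js \<noteq> []\<close> range eq concat_map_nth_permute_list[OF \<sigma>] by simp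
  then show "is = js"
    using permutes_inj[OF \<sigma>] by (simp add: inj_map_eq_map)
qed

lemma is_prefix_code_permute_list:
  assumes \<sigma>: "\<sigma> permutes {..<length C}" and pc: "is_prefix_code C"
  shows "is_prefix_code (permute_list \<sigma> C)"
  unfolding is_prefix_code_def
proof (intro allI impI)
  fix i j
  assume "i < length (permute_list \<sigma> C)" "j < length (permute_list \<sigma> C)"
  moreover from this have "\<sigma> i < length C" "\<sigma> j < length C"
    using permutes_in_image[OF \<sigma>] by simp_all
  ultimately show "prefix (permute_list \<sigma> C ! i) (permute_list \<sigma> C ! j) \<longleftrightarrow> i = j"
    using pc permutes_inj[OF \<sigma>]
    by (simp add: is_prefix_code_def permute_list_nth[OF \<sigma>] inj_eq)
qed

lemma permute_list_in_UD:
  assumes \<sigma>: "\<sigma> permutes {..<length L}" and C: "C \<in> UD n L"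
  shows "permute_list \<sigma> C \<in> UD n (permute_list \<sigma> L)"
proof -
  have len: "length C = length L" using C by (simp add: UD_def)
  then have "is_code (permute_list \<sigma> C)"
    using is_code_permute_list \<sigma> C by (simp add: UD_def)
  then show ?thesis
    using C \<sigma> len permutes_in_image[OF \<sigma>] by (auto simp: UD_def permute_list_nth)
qed

lemma permute_list_in_PR:
  assumes \<sigma>: "\<sigma> permutes {..<length L}" and C: "C \<in> PR n L"
  shows "permute_list \<sigma> C \<in> PR n (permute_list \<sigma> L)"
proof -
  have "C \<in> UD n L" "is_prefix_code C" and "length C = length L"
    using C by (simp_all add: PR_def UD_def)
  then show ?thesis
    using permute_list_in_UD[OF \<sigma>] is_prefix_code_permute_list \<sigma> by (simp add: PR_def)
qed

lemma rho_permute_list: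
  assumes "\<sigma> permutes {..<length L}"
  shows "rho n (permute_list \<sigma> L) = rho n L"
    and "UD n (permute_list \<sigma> L) = {} \<longleftrightarrow> UD n L = {}"
proof -
  have UD: "bij_betw (permute_list \<sigma>) (UD n L) (UD n (permute_list \<sigma> L))"
    using assms permute_list_in_UD by (rule bij_betw_permute_list) (auto simp: UD_def)
  have PR: "bij_betw (permute_list \<sigma>) (PR n L) (PR n (permute_list \<sigma> L))"
    using assms permute_list_in_PR by (rule bij_betw_permute_list) (auto simp: PR_def UD_def)
  show "rho n (permute_list \<sigma> L) = rho n L"
    using bij_betw_same_card[OF UD] bij_betw_same_card[OF PR] by (simp add: rho_def)
  show "UD n (permute_list \<sigma> L) = {} \<longleftrightarrow> UD n L = {}"
    using UD by (auto simp: bij_betw_def)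
qed

section \<open>Codes of three words\<close>

lemma card_eq_card_triples:
  assumes "\<And>xs. xs \<in> S \<Longrightarrow> length xs = 3"
  shows "card S = card {(x, y, z). [x, y, z] \<in> S}"
proof -
  have "bij_betw (\<lambda>(x, y, z). [x, y, z]) {(x, y, z). [x, y, z] \<in> S} S"
  proof (rule bij_betw_imageI)
    show "inj_on (\<lambda>(x, y, z). [x, y, z]) {(x, y, z). [x, y, z] \<in> S}"
      by (auto simp: inj_on_def)
    have "xs \<in> (\<lambda>(x, y, z). [x, y, z]) ` {(x, y, z). [x, y, z] \<in> S}" if "xs \<in> S" for xs
      using that assms[OF that] by (auto simp: numeral_3_eq_3 length_Suc_conv image_iff)
    then show "(\<lambda>(x, y, z). [x, y, z]) ` {(x, y, z). [x, y, z] \<in> S} = S" by auto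
  qed
  then show ?thesis by (simp add: bij_betw_same_card)
qed

lemma Cons3_in_UD_iff:
  "[x, y, z] \<in> UD n [a, b, c] \<longleftrightarrow>
     x \<in> words n a \<and> y \<in> words n b \<and> z \<in> words n c \<and> is_code [x, y, z]"
  by (auto simp: UD_def words_def numeral_3_eq_3 All_less_Suc)

lemma card_UD3:
  "card (UD n [a, b, c]) =
     card {(x, y, z). x \<in> words n a \<and> y \<in> words n b \<and> z \<in> words n c \<and> is_code [x, y, z]}"
proof -
  have "card (UD n [a, b, c]) = card {(x, y, z). [x, y, z] \<in> UD n [a, b, c]}"
    by (rule card_eq_card_triples) (simp add: UD_def)
  then show ?thesis by (simp only: Cons3_in_UD_iff)
qed

lemma card_PR3:
  "card (PR n [a, b, c]) =
     card {(x, y, z). x \<in> words n a \<and> y \<in> words n b \<and> z \<in> words n c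
                      \<and> is_code [x, y, z] \<and> is_prefix_code [x, y, z]}"
proof -
  have "card (PR n [a, b, c]) = card {(x, y, z). [x, y, z] \<in> PR n [a, b, c]}"
    by (rule card_eq_card_triples) (simp add: PR_def UD_def)
  then show ?thesis by (simp add: PR_def Cons3_in_UD_iff conj_assoc)
qed

lemma is_prefix_code_sorted_triple:
  assumes "length x \<le> length y" "length y \<le> length z"
  shows "is_prefix_code [x, y, z] \<longleftrightarrow> \<not> prefix x y \<and> \<not> prefix x z \<and> \<not> prefix y z"
  using assms prefix_length_ge_imp_eq[of y x] prefix_length_ge_imp_eq[of z x]
    prefix_length_ge_imp_eq[of z y]
  by (auto simp: is_prefix_code_def numeral_3_eq_3 All_less_Suc)

definition prefix_code_count :: "nat \<Rightarrow> nat \<Rightarrow> nat \<Rightarrow> nat \<Rightarrow> real" where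
  "prefix_code_count n a b c =
     real n ^ a * (real n ^ b - real n ^ (b - a)) * (real n ^ c - real n ^ (c - a) - real n ^ (c - b))"

lemma card_PR_sorted:
  assumes "0 < a" "a \<le> b" "b \<le> c"
  shows "real (card (PR n [a, b, c])) = prefix_code_count n a b c"
proof -
  let ?S = "SIGMA x:words n a. SIGMA y:{y \<in> words n b. \<not> prefix x y}.
              {z \<in> words n c. \<not> prefix x z \<and> \<not> prefix y z}"
  have "[] \<notin> set [x, y, z]" if "x \<in> words n a" "y \<in> words n b" "z \<in> words n c" for x y z
    using that assms by (auto simp: words_def)
  then have "{(x, y, z). x \<in> words n a \<and> y \<in> words n b \<and> z \<in> words n c
                \<and> is_code [x, y, z] \<and> is_prefix_code [x, y, z]} = ?S"
    using assms prefix_code_is_code is_prefix_code_sorted_triple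
    by (auto simp: words_def)
  moreover have "real (card ?S) = real (card (words n a))
      * (real n ^ b - real n ^ (b - a)) * (real n ^ c - real n ^ (c - a) - real n ^ (c - b))"
    using assms by (intro real_card_Sigma_Sigma_const)
      (simp_all add: card_words_without_prefix card_words_without_prefixes)
  ultimately show ?thesis by (simp add: card_PR3 card_words prefix_code_count_def)
qed

lemma card_UD3_le: "card (UD n [a, b, c]) \<le> n ^ a * n ^ b * n ^ c"
proof -
  have "{(x, y, z). x \<in> words n a \<and> y \<in> words n b \<and> z \<in> words n c \<and> is_code [x, y, z]}
      \<subseteq> words n a \<times> words n b \<times> words n c"
    by auto
  then have "card (UD n [a, b, c]) \<le> card (words n a \<times> words n b \<times> words n c)"
    unfolding card_UD3 by (rule card_mono[rotated]) simp
  then show ?thesis by (simp add: card_cartesian_product card_words)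
qed

lemma concat_replicate_in_words: "x \<in> words n k \<Longrightarrow> concat (replicate c x) \<in> words n (c * k)"
  by (induction c) (auto simp: words_def)

lemma concat_replicate_eqD:
  "0 < c \<Longrightarrow> length x = length y \<Longrightarrow> concat (replicate c x) = concat (replicate c y) \<Longrightarrow> x = y"
  by (cases c) (auto simp: append_eq_append_conv)

lemma card_UD_1_1_le:
  assumes "0 < c"
  shows "real (card (UD n [1, 1, c])) \<le> real n * (real n - 1) * (real n ^ c - 2)"
proof -
  let ?S = "SIGMA x:words n 1. SIGMA y:words n 1 - {x}.
              words n c - {concat (replicate c x), concat (replicate c y)}"
  have fibre_y: "real (card (words n 1 - {x})) = real n - 1" if "x \<in> words n 1" for x
  proof -
    have "real (card (words n 1 - {x})) = real n ^ 1 - real (card {x})"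
      by (rule real_card_words_Diff) (use that in simp)
    then show ?thesis by simp
  qed
  have fibre_z: "real (card (words n c - {concat (replicate c x), concat (replicate c y)}))
      = real n ^ c - 2" if x: "x \<in> words n 1" and y: "y \<in> words n 1 - {x}" for x y
  proof -
    have "length x = length y" using x y by (simp add: words_def)
    then have "concat (replicate c x) \<noteq> concat (replicate c y)"
      using concat_replicate_eqD[OF assms] y by blast
    moreover have sub: "{concat (replicate c x), concat (replicate c y)} \<subseteq> words n c"
      using x y concat_replicate_in_words[of _ n 1 c] by simp
    moreover have "real (card (words n c - {concat (replicate c x), concat (replicate c y)}))
        = real n ^ c - real (card {concat (replicate c x), concat (replicate c y)})"
      by (rule real_card_words_Diff[OF sub])
    ultimately show ?thesis by simp
  qed
  have "(x, y, z) \<in> ?S"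
    if "x \<in> words n 1" "y \<in> words n 1" "z \<in> words n c" and code: "is_code [x, y, z]" for x y z
  proof -
    have "y \<noteq> x" "z \<noteq> concat (replicate c x)" "z \<noteq> concat (replicate c y)"
      using is_code_word_neq_power[OF code, of 0 1 1] is_code_word_neq_power[OF code, of 0 2 c]
        is_code_word_neq_power[OF code, of 1 2 c] assms by simp_all
    then show ?thesis using that by simp
  qed
  then have "card (UD n [1, 1, c]) \<le> card ?S"
    unfolding card_UD3 by (intro card_mono) auto
  then have "real (card (UD n [1, 1, c])) \<le> real (card ?S)" by (simp only: of_nat_le_iff)
  also have "\<dots> = real (card (words n 1)) * (real n - 1) * (real n ^ c - 2)"
    by (rule real_card_Sigma_Sigma_const) (simp_all only: fibre_y fibre_z finite_Diff finite_words)
  finally show ?thesis by (simp add: card_words)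
qed

lemma card_UD_1_2_le:
  assumes "2 \<le> c"
  shows "real (card (UD n [1, 2, c])) \<le> real n * (real n ^ 2 - 1) * (real n ^ c - 1)"
proof -
  let ?S = "SIGMA x:words n 1. SIGMA y:words n 2 - {x @ x}. words n c - {concat (replicate c x)}"
  have fibre_y: "real (card (words n 2 - {x @ x})) = real n ^ 2 - 1" if "x \<in> words n 1" for x
  proof -
    have "real (card (words n 2 - {x @ x})) = real n ^ 2 - real (card {x @ x})"
      by (rule real_card_words_Diff) (use that in \<open>simp add: words_def\<close>)
    then show ?thesis by simp
  qed
  have fibre_z: "real (card (words n c - {concat (replicate c x)})) = real n ^ c - 1"
    if "x \<in> words n 1" for x
  proof -
    have "real (card (words n c - {concat (replicate c x)}))
        = real n ^ c - real (card {concat (replicate c x)})"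
      by (rule real_card_words_Diff) (use that concat_replicate_in_words[of x n 1 c] in simp)
    then show ?thesis by simp
  qed
  have "(x, y, z) \<in> ?S"
    if "x \<in> words n 1" "y \<in> words n 2" "z \<in> words n c" and code: "is_code [x, y, z]" for x y z
  proof -
    have "y \<noteq> x @ x" "z \<noteq> concat (replicate c x)"
      using is_code_word_neq_power[OF code, of 0 1 2] is_code_word_neq_power[OF code, of 0 2 c] assms
      by (simp_all add: numeral_2_eq_2)
    then show ?thesis using that by simp
  qed
  then have "card (UD n [1, 2, c]) \<le> card ?S"
    unfolding card_UD3 by (intro card_mono) auto
  then have "real (card (UD n [1, 2, c])) \<le> real (card ?S)" by (simp only: of_nat_le_iff)
  also have "\<dots> = real (card (words n 1)) * (real n ^ 2 - 1) * (real n ^ c - 1)"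
    by (rule real_card_Sigma_Sigma_const) (simp_all only: fibre_y fibre_z finite_Diff finite_words)
  finally show ?thesis by (simp add: card_words)
qed

lemma UD_2_1_1_empty:
  assumes "0 < c"
  shows "UD 2 [1, 1, c] = {}"
proof -
  have False if x: "x \<in> words 2 1" and y: "y \<in> words 2 1" and z: "z \<in> words 2 c"
    and code: "is_code [x, y, z]" for x y z
  proof -
    obtain p q where xp: "x = [p]" and yq: "y = [q]" and "p < 2" "q < 2"
      using x y by (auto simp: words_def length_Suc_conv)
    moreover have "y \<noteq> x" using is_code_word_neq_power[OF code, of 0 1 1] by simp
    ultimately have "l = p \<or> l = q" if "l < 2" for l
      using that by auto
    then have letters: "\<exists>j. j < length [x, y, z] \<and> j \<noteq> 2 \<and> [x, y, z] ! j = [l]"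
      if "l < 2" for l
    proof (cases "l = p")
      case True
      then show ?thesis using xp by (intro exI[of _ 0]) simp
    next
      case False
      then show ?thesis using \<open>l < 2 \<Longrightarrow> l = p \<or> l = q\<close> that yq by (intro exI[of _ 1]) simp
    qed
    show False
    proof (rule is_code_word_not_spelled_by_letters[OF code, of 2])
      show "[x, y, z] ! 2 \<noteq> []" using z assms by (auto simp: words_def)
      show "\<exists>j. j < length [x, y, z] \<and> j \<noteq> 2 \<and> [x, y, z] ! j = [l]"
        if "l \<in> set ([x, y, z] ! 2)" for l
        using letters that z by (auto simp: words_def)
    qed simp
  qed
  then have "{(x, y, z). x \<in> words 2 1 \<and> y \<in> words 2 1 \<and> z \<in> words 2 c \<and> is_code [x, y, z]} = {}"
    by blast
  then have "card (UD 2 [1, 1, c]) = 0" by (simp only: card_UD3 card.empty)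
  then show ?thesis using finite_UD by simp
qed

section \<open>The bound on \<open>rho\<close>\<close>

lemma less_rho_if_bounds:
  assumes "UD n L \<noteq> {}" "0 \<le> t" "real (card (UD n L)) \<le> U" "t * U < real (card (PR n L))"
  shows "t < rho n L"
proof -
  have "0 < card (UD n L)" using assms(1) finite_UD by (simp add: card_gt_0_iff)
  moreover have "t * real (card (UD n L)) \<le> t * U" using assms(3,2) by (rule mult_left_mono)
  ultimately show ?thesis using assms(4) by (simp add: rho_def pos_less_divide_eq)
qed

lemma alpha_inequality_large_alphabet:
  fixes N A D :: real
  assumes N: "3 \<le> N" and D: "1 \<le> D" and A: "N^2 \<le> A \<or> (A = N \<and> N \<le> D)"
  shows "(N - 2) / N * (A^2 * D) < (A - 1) * ((A - 1) * D - 1)"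
proof -
  have "0 < D * (2 * A^2 - 2 * N * A + N) - N * A + N"
    using A
  proof
    assume A: "N^2 \<le> A"
    have "3 * N \<le> N * N" using N by (intro mult_right_mono) auto
    then have "3 * N \<le> A" using A by (simp add: power2_eq_square)
    then have "0 \<le> A * (2 * A - 3 * N)" and "0 \<le> (D - 1) * (2 * A * (A - N) + N)"
      using N D by simp_all
    moreover have "D * (2 * A^2 - 2 * N * A + N) - N * A + N
        = (D - 1) * (2 * A * (A - N) + N) + A * (2 * A - 3 * N) + 2 * N"
      by (simp add: algebra_simps power2_eq_square)
    ultimately show ?thesis using N by linarith
  next
    assume AD: "A = N \<and> N \<le> D"
    then have "N * N \<le> D * N" using N by (intro mult_right_mono) auto
    moreover have "D * (2 * A^2 - 2 * N * A + N) - N * A + N = D * N - N * N + N"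
      using AD by (simp add: algebra_simps power2_eq_square)
    ultimately show ?thesis using N by linarith
  qed
  moreover have "N * ((A - 1) * ((A - 1) * D - 1)) - (N - 2) * (A^2 * D)
      = D * (2 * A^2 - 2 * N * A + N) - N * A + N"
    by (simp add: algebra_simps power2_eq_square)
  ultimately have "(N - 2) * (A^2 * D) < N * ((A - 1) * ((A - 1) * D - 1))"
    by linarith
  then show ?thesis using N by (simp add: pos_divide_less_eq mult.commute)
qed

lemma alpha_inequality_binary:
  fixes A D :: real
  assumes "(4 \<le> A \<and> 1 \<le> D) \<or> (A = 2 \<and> 4 \<le> D)"
  shows "1 / 6 * (A^2 * D) < (A - 1) * ((A - 1) * D - 1)"
proof -
  have "0 < (D - 1) * (A * (5 * A - 12) + 6) + A * (5 * A - 18) + 12"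
    using assms
  proof
    assume "4 \<le> A \<and> 1 \<le> D"
    then show ?thesis by (intro add_nonneg_pos mult_nonneg_nonneg) simp_all
  qed simp
  moreover have "6 * ((A - 1) * ((A - 1) * D - 1)) - A^2 * D
      = (D - 1) * (A * (5 * A - 12) + 6) + A * (5 * A - 18) + 12"
    by (simp add: algebra_simps power2_eq_square)
  ultimately show ?thesis by linarith
qed

lemma alpha_mult_power_less_prefix_code_count:
  assumes n: "2 \<le> n" and abc: "0 < a" "a \<le> b" "b \<le> c"
    and not_small: "\<not> (a = 1 \<and> b = 1)" "\<not> (n = 2 \<and> a = 1 \<and> b = 2)"
  shows "alpha n * (real n ^ a * real n ^ b * real n ^ c) < prefix_code_count n a b c"
proof -
  define N A D E where "N = real n" and "A = N ^ a" and "D = N ^ (b - a)" and "E = N ^ (c - b)"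
  have N: "2 \<le> N" using n by (simp add: N_def)
  have pow_b: "N ^ b = A * D" and pow_c: "N ^ c = A * D * E" and pow_ca: "N ^ (c - a) = D * E"
    using abc by (simp_all add: A_def D_def E_def flip: power_add)
  have D: "1 \<le> D" using N by (simp add: D_def)
  have ADE: "0 < A * D * E" using N by (simp add: A_def D_def E_def)
  have key: "alpha n * (A^2 * D) < (A - 1) * ((A - 1) * D - 1)"
  proof (cases "n = 2")
    case True
    have "4 \<le> A \<and> 1 \<le> D \<or> A = 2 \<and> 4 \<le> D"
    proof (cases "a = 1")
      case True
      then have "2 \<le> b - a" using abc not_small \<open>n = 2\<close> by auto
      then have "N ^ 2 \<le> D" unfolding D_def using N by (intro power_increasing) auto
      then show ?thesis using True \<open>n = 2\<close> by (simp add: A_def N_def)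
    next
      case False
      then have "N ^ 2 \<le> A" unfolding A_def using abc N by (intro power_increasing) auto
      then show ?thesis using D \<open>n = 2\<close> by (simp add: N_def)
    qed
    then show ?thesis using alpha_inequality_binary True by (simp add: alpha_def)
  next
    case False
    then have N3: "3 \<le> N" using n by (simp add: N_def)
    have "N ^ 2 \<le> A \<or> (A = N \<and> N \<le> D)"
    proof (cases "a = 1")
      case True
      then have "1 \<le> b - a" using abc not_small by auto
      then have "N ^ 1 \<le> D" unfolding D_def using N by (intro power_increasing) auto
      then show ?thesis using True by (simp add: A_def)
    next
      case False
      then show ?thesis unfolding A_def using abc N by (intro disjI1 power_increasing) auto
    qed
    then show ?thesis
      using alpha_inequality_large_alphabet[OF N3 D] False by (simp add: alpha_def N_def)
  qed
  have "alpha n * (real n ^ a * real n ^ b * real n ^ c) = A * D * E * (alpha n * (A^2 * D))"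
    by (simp add: N_def[symmetric] A_def[symmetric] pow_b pow_c power2_eq_square algebra_simps)
  also have "\<dots> < A * D * E * ((A - 1) * ((A - 1) * D - 1))"
    using key ADE by (rule mult_strict_left_mono)
  also have "\<dots> = prefix_code_count n a b c"
    by (simp add: prefix_code_count_def N_def[symmetric] A_def[symmetric] D_def[symmetric]
        E_def[symmetric] pow_b pow_c pow_ca algebra_simps)
  finally show ?thesis .
qed

lemma alpha_mult_less_prefix_code_count_1_1:
  assumes "3 \<le> n" "0 < c"
  shows "alpha n * (real n * (real n - 1) * (real n ^ c - 2)) < prefix_code_count n 1 1 c"
proof -
  define N where "N = real n"
  obtain k where c: "c = Suc k" using assms(2) by (cases c) auto
  have N: "3 \<le> N" using assms(1) by (simp add: N_def)
  have "alpha n * (N * (N - 1) * (N ^ c - 2)) = (N - 2) * (N - 1) * (N ^ c - 2)"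
    using assms(1) N by (simp add: alpha_def N_def)
  also have "\<dots> < (N - 2) * (N - 1) * N ^ c"
    using N by simp
  also have "\<dots> = N * (N - 1) * (N ^ c - N ^ (c - 1) - N ^ (c - 1))"
    unfolding c by (simp add: algebra_simps)
  finally show ?thesis by (simp add: prefix_code_count_def N_def)
qed

lemma alpha_mult_less_prefix_code_count_1_2:
  assumes "2 \<le> c"
  shows "alpha 2 * (2 * (2 ^ 2 - 1) * (2 ^ c - 1)) < prefix_code_count 2 1 2 c"
proof -
  obtain k where "c = k + 2" using assms by (metis add.commute le_Suc_ex)
  then show ?thesis by (simp add: alpha_def prefix_code_count_def power_add algebra_simps)
qed

lemma alpha_less_rho_sorted:
  assumes n: "2 \<le> n" and abc: "0 < a" "a \<le> b" "b \<le> c" and ne: "UD n [a, b, c] \<noteq> {}"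
  shows "alpha n < rho n [a, b, c]"
proof -
  have PR: "real (card (PR n [a, b, c])) = prefix_code_count n a b c"
    using abc by (rule card_PR_sorted)
  have alpha: "0 \<le> alpha n" using n by (simp add: alpha_def)
  consider (binary_1_1) "n = 2" "a = 1" "b = 1" | (large_1_1) "3 \<le> n" "a = 1" "b = 1"
    | (binary_1_2) "n = 2" "a = 1" "b = 2"
    | (generic) "\<not> (a = 1 \<and> b = 1)" "\<not> (n = 2 \<and> a = 1 \<and> b = 2)"
    using n by linarith
  then show ?thesis
  proof cases
    case binary_1_1
    then have "UD n [a, b, c] = {}" using UD_2_1_1_empty[of c] abc(3) by simp
    with ne show ?thesis by blast
  next
    case large_1_1
    then show ?thesis
      using less_rho_if_bounds[OF ne alpha, where U = "real n * (real n - 1) * (real n ^ c - 2)"]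
        card_UD_1_1_le[of c n] alpha_mult_less_prefix_code_count_1_1[of n c] PR abc(3) by simp
  next
    case binary_1_2
    then show ?thesis
      using less_rho_if_bounds[OF ne alpha, where U = "real n * (real n ^ 2 - 1) * (real n ^ c - 1)"]
        card_UD_1_2_le[of c n] alpha_mult_less_prefix_code_count_1_2[of c] PR abc(3) by simp
  next
    case generic
    have "real (card (UD n [a, b, c])) \<le> real n ^ a * real n ^ b * real n ^ c"
      using card_UD3_le[of n a b c] by (simp flip: of_nat_power of_nat_mult)
    then show ?thesis
      using alpha_mult_power_less_prefix_code_count[OF n abc generic] PR
      by (intro less_rho_if_bounds[OF ne alpha]) simp_all
  qed
qed

theorem theorem4:
  fixes n a b c :: nat
  assumes "n \<ge> 2" and "a > 0" and "b > 0" and "c > 0"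
    and "UD n [a, b, c] \<noteq> {}"
  shows "rho n [a, b, c] > alpha n"
proof -
  obtain \<sigma> where \<sigma>: "\<sigma> permutes {..<length [a, b, c]}" "permute_list \<sigma> [a, b, c] = sort [a, b, c]"
    by (rule mset_eq_permutation[OF mset_sort])
  define s where "s = sort [a, b, c]"
  have "length s = 3" by (simp add: s_def)
  then obtain a' b' c' where sorted: "sort [a, b, c] = [a', b', c']"
    unfolding s_def[symmetric] by (auto simp: numeral_3_eq_3 length_Suc_conv)
  have "a' \<le> b'" "b' \<le> c'"
    using sorted_sort[of "[a, b, c]"] unfolding sorted by simp_all
  moreover have "0 < a'"
    using set_sort[of "\<lambda>x. x" "[a, b, c]"] assms(2-4) unfolding sorted by auto
  moreover have "UD n [a', b', c'] \<noteq> {}"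
    using rho_permute_list(2)[OF \<sigma>(1)] assms(5) unfolding \<sigma>(2) sorted by simp
  ultimately have "alpha n < rho n [a', b', c']"
    using alpha_less_rho_sorted assms(1) by blast
  then show ?thesis
    using rho_permute_list(1)[OF \<sigma>(1)] unfolding \<sigma>(2) sorted by simp
qed

end
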